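(* Let $P_1(z)=1+12z+9z^2$, $P_2(z)=1+4z+3z^2$, $P_3(z)=1+8z+8z^2$, $P_4(z)=1+15z+45z^2+27z^3$ and $P_5(z)=1+13z+21z^2+9z^3$. For each $i$, let $N_i$ be the number of pairwise non-isomorphic connected finite simple graphs whose independence polynomial is $P_i$. Then $N_i>0$ for each $i$; in particular $N_1\ge10$, $N_2=1$, $N_3\ge25$, $N_4\ge4$ and $N_5\ge5$.
   Context: For a finite simple graph $G$, the independence polynomial is $I_G(z)=\sum_{i\ge0} a_i z^i$, where $a_i$ is the number of sets of $i$ pairwise non-adjacent vertices of $G$ (with $a_0=1$). *)

theory Defs
  imports "HOL-Computational_Algebra.Polynomial"
begin

text \<open>A finite simple graph with vertices drawn from nat: a pair (V, E) of a finite
vertex set and a set of 2-element edges {u,v} with u, v in V.\<close>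
type_synonym graph = "nat set \<times> nat set set"

definition verts :: "graph \<Rightarrow> nat set" where "verts G = fst G"
definition edges :: "graph \<Rightarrow> nat set set" where "edges G = snd G"

definition simple_graph :: "graph \<Rightarrow> bool" where
  "simple_graph G \<longleftrightarrow> finite (verts G) \<and>
     (\<forall>e\<in>edges G. \<exists>u v. u \<noteq> v \<and> u \<in> verts G \<and> v \<in> verts G \<and> e = {u, v})"

definition adj :: "graph \<Rightarrow> nat \<Rightarrow> nat \<Rightarrow> bool" where
  "adj G u v \<longleftrightarrow> {u, v} \<in> edges G"

definition connected_graph :: "graph \<Rightarrow> bool" where
  "connected_graph G \<longleftrightarrow> verts G \<noteq> {} \<and>
     (\<forall>u\<in>verts G. \<forall>v\<in>verts G. (adj G)\<^sup>*\<^sup>* u v)"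

definition independent_set :: "graph \<Rightarrow> nat set \<Rightarrow> bool" where
  "independent_set G S \<longleftrightarrow> S \<subseteq> verts G \<and> (\<forall>u\<in>S. \<forall>v\<in>S. \<not> adj G u v)"

definition indep_count :: "graph \<Rightarrow> nat \<Rightarrow> nat" where
  "indep_count G i = card {S. independent_set G S \<and> card S = i}"

definition indep_poly :: "graph \<Rightarrow> int poly" where
  "indep_poly G = (\<Sum>i\<le>card (verts G). monom (int (indep_count G i)) i)"

definition graph_iso :: "graph \<Rightarrow> graph \<Rightarrow> bool" where
  "graph_iso G H \<longleftrightarrow> (\<exists>f. bij_betw f (verts G) (verts H) \<and>
     (\<forall>u\<in>verts G. \<forall>v\<in>verts G. adj G u v \<longleftrightarrow> adj H (f u) (f v)))"

definition num_graphs_with_poly :: "int poly \<Rightarrow> nat" where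
  "num_graphs_with_poly P =
     card ({G. simple_graph G \<and> connected_graph G \<and> indep_poly G = P}
           // {(G, H). graph_iso G H})"

end

(*
  Each lower bound is witnessed by explicit connected graphs, given by their lists of non-edges.
  Their independence polynomials are computed by a verified count of cliques in the complement,
  and they are pairwise non-isomorphic because the multisets of complement degrees at the two ends
  of the non-edges differ. There are finitely many isomorphism classes for a given polynomial P,
  since a graph with I_G = P has P'(0) vertices.

  For 1 + 4z + 3z^2 a graph has four vertices, three edges and no independent triple; if it is
  connected it has no isolated vertex either, and an exhaustive check over the 64 graphs on four
  labelled vertices shows that it is then the path P_4.
*)
theory Submission
  imports Defs "HOL-Library.Multiset" "HOL-Library.Product_Lexorder"
begin

lemma adj_commute: "adj G u v \<longleftrightarrow> adj G v u"
  by (simp add: adj_def insert_commute)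

lemma adj_irrefl: "simple_graph G \<Longrightarrow> \<not> adj G u u"
  unfolding simple_graph_def adj_def by (metis doubleton_eq_iff insert_absorb2)

lemma adj_in_verts: "simple_graph G \<Longrightarrow> adj G u v \<Longrightarrow> u \<in> verts G \<and> v \<in> verts G"
  unfolding simple_graph_def adj_def by (metis doubleton_eq_iff)

lemma edges_subset_Pow_verts: "simple_graph G \<Longrightarrow> edges G \<subseteq> Pow (verts G)"
  unfolding simple_graph_def by fastforce

lemma connected_graphI:
  assumes "c \<in> verts G" and reach: "\<And>v. v \<in> verts G \<Longrightarrow> (adj G)\<^sup>*\<^sup>* c v"
  shows "connected_graph G"
proof -
  have to_c: "(adj G)\<^sup>*\<^sup>* v c" if "v \<in> verts G" for v
    using reach[OF that]
  proof (induction rule: rtranclp_induct)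
    case (step y z)
    have "adj G z y"
      using step.hyps(2) by (simp add: adj_commute)
    then show ?case
      using step.IH by (rule converse_rtranclp_into_rtranclp)
  qed simp
  have "(adj G)\<^sup>*\<^sup>* u v" if "u \<in> verts G" "v \<in> verts G" for u v
    using rtranclp_trans[OF to_c reach] that .
  with assms(1) show ?thesis
    unfolding connected_graph_def by blast
qed

lemma connected_graph_ex_adj:
  assumes "connected_graph G" "u \<in> verts G" "v \<in> verts G" "u \<noteq> v"
  obtains w where "adj G u w"
proof -
  have "(adj G)\<^sup>*\<^sup>* u v"
    using assms unfolding connected_graph_def by blast
  with assms(4) that show thesis
    by (blast elim: converse_rtranclpE)
qed

lemma graph_iso_refl: "graph_iso G G"
  unfolding graph_iso_def by (rule exI[of _ id]) auto

lemma graph_iso_sym: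
  assumes "graph_iso G H" shows "graph_iso H G"
proof -
  obtain f where f: "bij_betw f (verts G) (verts H)"
    "\<forall>u\<in>verts G. \<forall>v\<in>verts G. adj G u v \<longleftrightarrow> adj H (f u) (f v)"
    using assms unfolding graph_iso_def by blast
  let ?g = "the_inv_into (verts G) f"
  have g: "bij_betw ?g (verts H) (verts G)"
    using f(1) by (rule bij_betw_the_inv_into)
  have "adj H u v \<longleftrightarrow> adj G (?g u) (?g v)" if "u \<in> verts H" "v \<in> verts H" for u v
  proof -
    have "f (?g u) = u" "f (?g v) = v"
      using that f(1) by (simp_all add: f_the_inv_into_f_bij_betw)
    moreover have "?g u \<in> verts G" "?g v \<in> verts G"
      using that g by (auto dest: bij_betwE)
    ultimately show ?thesis
      using f(2) by metis
  qed
  with g show ?thesis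
    unfolding graph_iso_def by blast
qed

lemma graph_iso_trans:
  assumes "graph_iso G H" "graph_iso H K" shows "graph_iso G K"
proof -
  obtain f where f: "bij_betw f (verts G) (verts H)"
    "\<forall>u\<in>verts G. \<forall>v\<in>verts G. adj G u v \<longleftrightarrow> adj H (f u) (f v)"
    using assms(1) unfolding graph_iso_def by blast
  obtain g where g: "bij_betw g (verts H) (verts K)"
    "\<forall>u\<in>verts H. \<forall>v\<in>verts H. adj H u v \<longleftrightarrow> adj K (g u) (g v)"
    using assms(2) unfolding graph_iso_def by blast
  have "bij_betw (g \<circ> f) (verts G) (verts K)"
    using f(1) g(1) by (rule bij_betw_trans)
  moreover have "\<forall>u\<in>verts G. \<forall>v\<in>verts G. adj G u v \<longleftrightarrow> adj K ((g \<circ> f) u) ((g \<circ> f) v)"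
    using f g by (auto dest: bij_betwE)
  ultimately show ?thesis
    unfolding graph_iso_def by blast
qed

lemma equiv_graph_iso: "equiv UNIV {(G, H). graph_iso G H}"
  unfolding equiv_def refl_on_def sym_def trans_def
  using graph_iso_refl graph_iso_sym graph_iso_trans by blast

lemma graph_iso_image:
  assumes "simple_graph G" "inj_on h (verts G)"
  shows "graph_iso G (h ` verts G, image h ` edges G)"
proof -
  let ?H = "(h ` verts G, image h ` edges G)"
  have "adj G u v \<longleftrightarrow> adj ?H (h u) (h v)" if uv: "u \<in> verts G" "v \<in> verts G" for u v
  proof -
    have "h ` {u, v} = h ` e \<longleftrightarrow> {u, v} = e" if "e \<in> edges G" for e
    proof (rule inj_on_image_eq_iff[OF assms(2)])
      show "{u, v} \<subseteq> verts G" using uv by simp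
      show "e \<subseteq> verts G" using edges_subset_Pow_verts[OF assms(1)] that by blast
    qed
    then have "{u, v} \<in> edges G \<longleftrightarrow> h ` {u, v} \<in> image h ` edges G"
      by blast
    then show ?thesis
      unfolding adj_def by (simp add: edges_def)
  qed
  moreover have "bij_betw h (verts G) (verts ?H)"
    using assms(2) by (simp add: verts_def inj_on_imp_bij_betw)
  ultimately show ?thesis
    unfolding graph_iso_def by blast
qed

lemma simple_graph_image:
  assumes "simple_graph G" "inj_on h (verts G)"
  shows "simple_graph (h ` verts G, image h ` edges G)"
  unfolding simple_graph_def verts_def edges_def fst_conv snd_conv
proof (intro conjI ballI)
  show "finite (h ` fst G)"
    using assms(1) by (simp add: simple_graph_def verts_def)
next
  fix e' assume "e' \<in> image h ` snd G"
  then obtain e where "e \<in> edges G" "e' = h ` e"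
    by (auto simp: edges_def)
  moreover obtain u v where "u \<noteq> v" "u \<in> verts G" "v \<in> verts G" "e = {u, v}"
    using assms(1) \<open>e \<in> edges G\<close> unfolding simple_graph_def by blast
  moreover have "h u \<noteq> h v"
    using assms(2) calculation by (auto dest: inj_onD)
  ultimately show "\<exists>u v. u \<noteq> v \<and> u \<in> h ` fst G \<and> v \<in> h ` fst G \<and> e' = {u, v}"
    unfolding verts_def by blast
qed

lemma graph_iso_relabel:
  assumes "simple_graph G"
  obtains H where "graph_iso G H" "simple_graph H" "verts H = {..<card (verts G)}"
proof -
  obtain h where "bij_betw h (verts G) {..<card (verts G)}"
    using ex_bij_betw_finite_nat assms unfolding simple_graph_def atLeast0LessThan by blast
  then have h: "inj_on h (verts G)" "h ` verts G = {..<card (verts G)}"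
    by (auto simp: bij_betw_def)
  show thesis
  proof (rule that)
    show "graph_iso G (h ` verts G, image h ` edges G)"
      using assms h(1) by (rule graph_iso_image)
    show "simple_graph (h ` verts G, image h ` edges G)"
      using assms h(1) by (rule simple_graph_image)
    show "verts (h ` verts G, image h ` edges G) = {..<card (verts G)}"
      using h(2) by (simp add: verts_def)
  qed
qed

lemma graph_iso_connected_graph:
  assumes "graph_iso G H" "simple_graph G" "connected_graph G"
  shows "connected_graph H"
proof -
  obtain f where f: "bij_betw f (verts G) (verts H)"
    "\<forall>u\<in>verts G. \<forall>v\<in>verts G. adj G u v \<longleftrightarrow> adj H (f u) (f v)"
    using assms(1) unfolding graph_iso_def by blast
  have walk: "(adj H)\<^sup>*\<^sup>* (f u) (f v)" if "(adj G)\<^sup>*\<^sup>* u v" for u v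
    using that
  proof (induction rule: rtranclp_induct)
    case (step y z)
    have "y \<in> verts G" "z \<in> verts G"
      using adj_in_verts[OF assms(2) step.hyps(2)] by auto
    then have "adj H (f y) (f z)"
      using f(2) step.hyps(2) by simp
    with step.IH show ?case
      by (rule rtranclp.rtrancl_into_rtrancl)
  qed simp
  have onto: "verts H = f ` verts G"
    using f(1) by (simp add: bij_betw_def)
  show ?thesis
    unfolding connected_graph_def
  proof (intro conjI ballI)
    show "verts H \<noteq> {}"
      using assms(3) onto by (simp add: connected_graph_def)
    fix x y assume "x \<in> verts H" "y \<in> verts H"
    then obtain u v where "u \<in> verts G" "v \<in> verts G" "x = f u" "y = f v"
      using onto by blast
    then show "(adj H)\<^sup>*\<^sup>* x y"
      using assms(3) walk unfolding connected_graph_def by simp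
  qed
qed

section \<open>Independence polynomials\<close>

lemma indep_count_eq_0:
  assumes "finite (verts G)" "card (verts G) < i"
  shows "indep_count G i = 0"
proof -
  have "{S. independent_set G S \<and> card S = i} = {}"
    using assms card_mono unfolding independent_set_def by fastforce
  then show ?thesis
    unfolding indep_count_def by (metis card.empty)
qed

lemma indep_count_eq_0_mono:
  assumes "finite (verts G)" "indep_count G k = 0" "k \<le> l"
  shows "indep_count G l = 0"
proof (rule ccontr)
  let ?I = "\<lambda>k. {S. independent_set G S \<and> card S = k}"
  have finite: "finite (?I k)" for k
    by (rule finite_subset[of _ "Pow (verts G)"]) (auto simp: independent_set_def assms(1))
  assume "indep_count G l \<noteq> 0"
  then have "?I l \<noteq> {}"
    unfolding indep_count_def by (metis card.empty)
  then obtain S where S: "independent_set G S" "card S = l"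
    by blast
  then obtain T where "T \<subseteq> S" "card T = k"
    using assms(3) obtain_subset_with_card_n by metis
  with S(1) have "T \<in> ?I k"
    unfolding independent_set_def by blast
  with finite[of k] have "indep_count G k \<noteq> 0"
    unfolding indep_count_def by (metis card_0_eq empty_iff)
  with assms(2) show False
    by simp
qed

lemma coeff_indep_poly:
  assumes "finite (verts G)"
  shows "coeff (indep_poly G) i = int (indep_count G i)"
proof -
  have "coeff (indep_poly G) i = (if i \<le> card (verts G) then int (indep_count G i) else 0)"
    unfolding indep_poly_def coeff_sum coeff_monom by (simp add: sum.delta)
  then show ?thesis
    using indep_count_eq_0[OF assms, of i] by simp
qed

lemma indep_poly_eq_Poly:
  assumes "finite (verts G)" and counts: "map (indep_count G) [0..<Suc (length cs)] = cs @ [0]"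
  shows "indep_poly G = Poly (map int cs)"
proof (rule poly_eqI)
  fix i
  have count: "indep_count G j = (cs @ [0]) ! j" if "j \<le> length cs" for j
    using arg_cong[OF counts, of "\<lambda>xs. xs ! j"] that by (simp del: upt_Suc)
  show "coeff (indep_poly G) i = coeff (Poly (map int cs)) i"
  proof (cases "i < length cs")
    case True
    then show ?thesis
      using count[of i] by (simp add: coeff_indep_poly assms(1) nth_default_def nth_append)
  next
    case False
    have "indep_count G i = 0"
      using indep_count_eq_0_mono[OF assms(1)] count[of "length cs"] False by simp
    then show ?thesis
      using False by (simp add: coeff_indep_poly assms(1) nth_default_def)
  qed
qed

lemma indep_count_1: "simple_graph G \<Longrightarrow> indep_count G 1 = card (verts G)"
proof -
  assume "simple_graph G"
  then have "{S. independent_set G S \<and> card S = 1} = (\<lambda>v. {v}) ` verts G"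
    using adj_irrefl[OF \<open>simple_graph G\<close>] unfolding independent_set_def by (auto simp: card_Suc_eq)
  then show ?thesis
    unfolding indep_count_def by (simp add: card_image)
qed

lemma card_verts_eq_coeff_indep_poly:
  "simple_graph G \<Longrightarrow> int (card (verts G)) = coeff (indep_poly G) 1"
  using coeff_indep_poly[of G 1] indep_count_1[of G] by (simp add: simple_graph_def)

lemma graph_iso_indep_count:
  assumes "graph_iso G H"
  shows "indep_count G k = indep_count H k"
proof -
  obtain f where f: "bij_betw f (verts G) (verts H)"
    "\<forall>u\<in>verts G. \<forall>v\<in>verts G. adj G u v \<longleftrightarrow> adj H (f u) (f v)"
    using assms unfolding graph_iso_def by blast
  let ?I = "\<lambda>G. {S. independent_set G S \<and> card S = k}"
  have inj: "inj_on f (verts G)" and onto: "f ` verts G = verts H"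
    using f(1) by (auto simp: bij_betw_def)
  have card_image_f: "card (f ` S) = card S" if "S \<subseteq> verts G" for S
    using inj that by (meson card_image inj_on_subset)
  have "?I H = image f ` ?I G"
  proof (intro set_eqI iffI)
    fix T assume T: "T \<in> ?I H"
    let ?S = "verts G \<inter> f -` T"
    have "T \<subseteq> f ` verts G"
      using T onto by (simp add: independent_set_def)
    then have "T = f ` ?S"
      by blast
    moreover have "independent_set G ?S"
      using T f(2) unfolding independent_set_def by auto
    ultimately show "T \<in> image f ` ?I G"
      using T card_image_f[of ?S] by auto
  next
    fix T assume "T \<in> image f ` ?I G"
    then obtain S where S: "S \<in> ?I G" "T = f ` S"
      by blast
    then show "T \<in> ?I H"
      using f(2) onto card_image_f[of S] unfolding independent_set_def by (auto simp: subset_iff)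
  qed
  moreover have "inj_on (image f) (?I G)"
    using inj_on_image_Pow[OF inj] unfolding independent_set_def
    by (rule inj_on_subset) auto
  ultimately show ?thesis
    unfolding indep_count_def by (simp add: card_image)
qed

lemma finite_iso_classes_with_poly:
  "finite ({G. simple_graph G \<and> connected_graph G \<and> indep_poly G = P} // {(G, H). graph_iso G H})"
  (is "finite (?S // ?iso)")
proof -
  let ?n = "nat (coeff P 1)"
  have "?S // ?iso \<subseteq> (\<lambda>G. ?iso `` {G}) ` ({{..<?n}} \<times> Pow (Pow {..<?n}))"
  proof
    fix C assume "C \<in> ?S // ?iso"
    then obtain G where G: "G \<in> ?S" "C = ?iso `` {G}"
      by (auto elim: quotientE)
    then have "simple_graph G" "card (verts G) = ?n"
      using card_verts_eq_coeff_indep_poly[of G] by auto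
    then obtain H where H: "graph_iso G H" "simple_graph H" "verts H = {..<?n}"
      using graph_iso_relabel by metis
    have "C = ?iso `` {H}"
      using G(2) H(1) equiv_class_eq[OF equiv_graph_iso] by blast
    moreover have "H \<in> {{..<?n}} \<times> Pow (Pow {..<?n})"
      using H(3) edges_subset_Pow_verts[OF H(2)] unfolding verts_def edges_def
      by (simp add: mem_Times_iff)
    ultimately show "C \<in> (\<lambda>G. ?iso `` {G}) ` ({{..<?n}} \<times> Pow (Pow {..<?n}))"
      by blast
  qed
  then show ?thesis
    by (rule finite_subset) simp
qed

lemma num_graphs_with_poly_ge:
  assumes "\<forall>G\<in>set Gs. simple_graph G \<and> connected_graph G \<and> indep_poly G = P"
    and "distinct Gs" and "\<forall>G\<in>set Gs. \<forall>H\<in>set Gs. graph_iso G H \<longrightarrow> G = H"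
  shows "length Gs \<le> num_graphs_with_poly P"
proof -
  let ?S = "{G. simple_graph G \<and> connected_graph G \<and> indep_poly G = P}"
  let ?iso = "{(G, H). graph_iso G H}"
  have "inj_on (\<lambda>G. ?iso `` {G}) (set Gs)"
  proof (rule inj_onI)
    fix G H assume "G \<in> set Gs" "H \<in> set Gs" "?iso `` {G} = ?iso `` {H}"
    then show "G = H"
      using assms(3) equiv_class_eq_iff[OF equiv_graph_iso] by blast
  qed
  then have "length Gs = card ((\<lambda>G. ?iso `` {G}) ` set Gs)"
    using assms(2) by (simp add: card_image distinct_card)
  also have "\<dots> \<le> card (?S // ?iso)"
    by (intro card_mono[OF finite_iso_classes_with_poly] image_subsetI quotientI)
      (use assms(1) in simp)
  finally show ?thesis
    unfolding num_graphs_with_poly_def .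
qed

lemma num_graphs_with_poly_eq_1:
  assumes "simple_graph G\<^sub>0" "connected_graph G\<^sub>0" "indep_poly G\<^sub>0 = P"
    and "\<And>G. simple_graph G \<Longrightarrow> connected_graph G \<Longrightarrow> indep_poly G = P \<Longrightarrow> graph_iso G\<^sub>0 G"
  shows "num_graphs_with_poly P = 1"
proof -
  let ?S = "{G. simple_graph G \<and> connected_graph G \<and> indep_poly G = P}"
  let ?iso = "{(G, H). graph_iso G H}"
  have "?S // ?iso = {?iso `` {G\<^sub>0}}"
  proof (intro equalityI subsetI)
    fix C assume "C \<in> ?S // ?iso"
    then obtain G where "G \<in> ?S" "C = ?iso `` {G}"
      by (auto elim: quotientE)
    with assms(4) show "C \<in> {?iso `` {G\<^sub>0}}"
      using equiv_class_eq[OF equiv_graph_iso] by blast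
  next
    fix C assume "C \<in> {?iso `` {G\<^sub>0}}"
    moreover have "?iso `` {G\<^sub>0} \<in> ?S // ?iso"
      by (rule quotientI) (use assms(1-3) in simp)
    ultimately show "C \<in> ?S // ?iso"
      by blast
  qed
  then show ?thesis
    unfolding num_graphs_with_poly_def by simp
qed

section \<open>Counting cliques\<close>

definition cliques :: "('a \<Rightarrow> 'a \<Rightarrow> bool) \<Rightarrow> 'a set \<Rightarrow> nat \<Rightarrow> 'a set set" where
  "cliques R A k = {S. S \<subseteq> A \<and> card S = k \<and> (\<forall>u\<in>S. \<forall>w\<in>S. u \<noteq> w \<longrightarrow> R u w)}"

lemma cliques_0: "finite A \<Longrightarrow> cliques R A 0 = {{}}"
  unfolding cliques_def by (auto dest: finite_subset)

lemma cliques_empty_Suc: "cliques R {} (Suc k) = {}"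
  unfolding cliques_def by auto

lemma card_cliques_insert:
  assumes "finite A" "v \<notin> A" "symp R"
  shows "card (cliques R (insert v A) (Suc k)) =
    card (cliques R A (Suc k)) + card (cliques R {w \<in> A. R v w} k)"
proof -
  let ?with_v = "insert v ` cliques R {w \<in> A. R v w} k"
  have fin: "finite (cliques R B j)" if "B \<subseteq> A" for B j
  proof (rule finite_subset)
    show "cliques R B j \<subseteq> Pow A"
      using that unfolding cliques_def by blast
  qed (simp add: assms(1))
  have split: "cliques R (insert v A) (Suc k) = cliques R A (Suc k) \<union> ?with_v"
  proof (intro equalityI subsetI)
    fix S assume S: "S \<in> cliques R (insert v A) (Suc k)"
    have "finite S"
      using S assms(1) unfolding cliques_def by (auto dest: finite_subset)
    show "S \<in> cliques R A (Suc k) \<union> ?with_v"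
    proof (cases "v \<in> S")
      case True
      then have "S - {v} \<in> cliques R {w \<in> A. R v w} k"
        using S \<open>finite S\<close> unfolding cliques_def by auto
      moreover have "S = insert v (S - {v})"
        using True by blast
      ultimately show ?thesis
        by blast
    next
      case False
      then have "S \<in> cliques R A (Suc k)"
        using S unfolding cliques_def by blast
      then show ?thesis ..
    qed
  next
    fix S assume "S \<in> cliques R A (Suc k) \<union> ?with_v"
    then show "S \<in> cliques R (insert v A) (Suc k)"
    proof
      assume "S \<in> ?with_v"
      then obtain T where T: "T \<in> cliques R {w \<in> A. R v w} k" "S = insert v T"
        by blast
      then have "finite T" "v \<notin> T"
        using assms(1,2) unfolding cliques_def by (auto dest: finite_subset)
      with T assms(3) show ?thesis
        unfolding cliques_def by (auto dest: sympD)
    qed (auto simp: cliques_def)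
  qed
  have "inj_on (insert v) (cliques R {w \<in> A. R v w} k)"
  proof (rule inj_onI)
    fix S T assume "S \<in> cliques R {w \<in> A. R v w} k" "T \<in> cliques R {w \<in> A. R v w} k"
    then have "v \<notin> S" "v \<notin> T"
      using assms(2) unfolding cliques_def by auto
    moreover assume "insert v S = insert v T"
    ultimately show "S = T"
      by (metis Diff_insert_absorb)
  qed
  moreover have "cliques R A (Suc k) \<inter> ?with_v = {}"
    using assms(2) unfolding cliques_def by blast
  ultimately show ?thesis
    unfolding split using fin[of A "Suc k"] fin[of "{w \<in> A. R v w}" k]
    by (simp add: card_Un_disjoint card_image)
qed

text \<open>Each vertex carries the list of its neighbours, so that the recursion never has to search
  for adjacencies; this keeps evaluation by the simplifier fast.\<close>
fun count_cliques :: "('a \<times> 'a list) list \<Rightarrow> nat \<Rightarrow> nat" where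
  "count_cliques [] k = (if k = 0 then 1 else 0)"
| "count_cliques ((v, N) # xs) k = (if k = 0 then 1 else
     count_cliques xs k + count_cliques (filter (\<lambda>p. fst p \<in> set N) xs) (k - 1))"

lemma count_cliques_eq_card_cliques:
  assumes "symp R"
    and "sorted_wrt (\<lambda>p q. fst p \<noteq> fst q \<and> (fst q \<in> set (snd p) \<longleftrightarrow> R (fst p) (fst q))) xs"
  shows "count_cliques xs k = card (cliques R (fst ` set xs) k)"
  using assms(2)
proof (induction xs k rule: count_cliques.induct)
  case (1 k)
  then show ?case
    by (cases k) (simp_all add: cliques_0 cliques_empty_Suc)
next
  case (2 v N xs k)
  show ?case
  proof (cases k)
    case 0
    then show ?thesis
      by (simp add: cliques_0)
  next
    case (Suc j)
    let ?ys = "filter (\<lambda>p. fst p \<in> set N) xs"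
    have v: "v \<notin> fst ` set xs"
      using "2.prems" by auto
    have "fst ` set ?ys = {w \<in> fst ` set xs. R v w}"
      using "2.prems" by force
    moreover have "count_cliques ?ys (k - 1) = card (cliques R (fst ` set ?ys) (k - 1))"
      using "2.prems" Suc by (intro "2.IH"(2)) (simp_all add: sorted_wrt_filter)
    moreover have "count_cliques xs k = card (cliques R (fst ` set xs) k)"
      using "2.prems" Suc by (intro "2.IH"(1)) simp_all
    ultimately show ?thesis
      using card_cliques_insert[OF _ v assms(1), of j] Suc by simp
  qed
qed

lemma indep_count_eq_count_cliques:
  assumes "simple_graph G" "fst ` set xs = verts G"
    and "sorted_wrt (\<lambda>p q. fst p \<noteq> fst q \<and> (fst q \<in> set (snd p) \<longleftrightarrow> \<not> adj G (fst p) (fst q))) xs"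
  shows "indep_count G k = count_cliques xs k"
proof -
  have "symp (\<lambda>u w. \<not> adj G u w)"
    by (simp add: symp_def adj_commute)
  from count_cliques_eq_card_cliques[OF this assms(3)]
  have "count_cliques xs k = card (cliques (\<lambda>u w. \<not> adj G u w) (verts G) k)"
    unfolding assms(2) .
  also have "cliques (\<lambda>u w. \<not> adj G u w) (verts G) k = {S. independent_set G S \<and> card S = k}"
    using adj_irrefl[OF assms(1)] unfolding independent_set_def cliques_def by metis
  finally show ?thesis
    unfolding indep_count_def ..
qed

section \<open>Graphs given by their non-edges\<close>

text \<open>The witness graphs are dense, so they are described by the list of their non-edges.\<close>
definition listed :: "(nat \<times> nat) list \<Rightarrow> nat \<Rightarrow> nat \<Rightarrow> bool" where
  "listed ne u w \<longleftrightarrow> (u, w) \<in> set ne \<or> (w, u) \<in> set ne"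

definition compl_graph :: "nat \<Rightarrow> (nat \<times> nat) list \<Rightarrow> graph" where
  "compl_graph n ne = ({..<n}, {{u, w} | u w. u < n \<and> w < n \<and> u \<noteq> w \<and> \<not> listed ne u w})"

definition valid_nonedges :: "nat \<Rightarrow> (nat \<times> nat) list \<Rightarrow> bool" where
  "valid_nonedges n ne \<longleftrightarrow> distinct ne \<and> (\<forall>(u, w)\<in>set ne. u < w \<and> w < n)"

lemma verts_compl_graph [simp]: "verts (compl_graph n ne) = {..<n}"
  by (simp add: compl_graph_def verts_def)

lemma adj_compl_graph:
  "adj (compl_graph n ne) u w \<longleftrightarrow> u < n \<and> w < n \<and> u \<noteq> w \<and> \<not> listed ne u w"
  unfolding adj_def compl_graph_def edges_def listed_def by (auto simp: doubleton_eq_iff)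

lemma simple_compl_graph: "simple_graph (compl_graph n ne)"
  unfolding simple_graph_def compl_graph_def verts_def edges_def by auto

lemma valid_nonedgesD: "valid_nonedges n ne \<Longrightarrow> (u, w) \<in> set ne \<Longrightarrow> u < w \<and> w < n"
  unfolding valid_nonedges_def by blast

lemma valid_nonedges_asym: "valid_nonedges n ne \<Longrightarrow> (u, w) \<in> set ne \<Longrightarrow> (w, u) \<notin> set ne"
  using valid_nonedgesD[of n ne u w] valid_nonedgesD[of n ne w u] by auto

definition succs :: "(nat \<times> nat) list \<Rightarrow> nat \<Rightarrow> nat list" where
  "succs ne v = map snd (filter (\<lambda>p. fst p = v) ne)"

definition succ_table :: "nat \<Rightarrow> (nat \<times> nat) list \<Rightarrow> (nat \<times> nat list) list" where
  "succ_table n ne = map (\<lambda>v. (v, succs ne v)) [0..<n]"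

lemma indep_count_compl_graph:
  assumes "valid_nonedges n ne"
  shows "indep_count (compl_graph n ne) k = count_cliques (succ_table n ne) k"
  unfolding succ_table_def
proof (rule indep_count_eq_count_cliques)
  have succs: "w \<in> set (succs ne u) \<longleftrightarrow> \<not> adj (compl_graph n ne) u w" if "u < w" "w < n" for u w
    using that valid_nonedgesD[OF assms, of w u]
    by (auto simp: succs_def adj_compl_graph listed_def image_iff)
  show "sorted_wrt (\<lambda>p q. fst p \<noteq> fst q \<and> (fst q \<in> set (snd p) \<longleftrightarrow> \<not> adj (compl_graph n ne) (fst p) (fst q)))
      (map (\<lambda>v. (v, succs ne v)) [0..<n])"
    unfolding sorted_wrt_map by (rule sorted_wrt_mono_rel[OF _ sorted_wrt_upt]) (use succs in auto)
qed (auto simp: simple_compl_graph image_image atLeast0LessThan)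

definition has_indep_counts :: "nat \<Rightarrow> nat list \<Rightarrow> (nat \<times> nat) list \<Rightarrow> bool" where
  "has_indep_counts n cs ne \<longleftrightarrow>
     map (count_cliques (succ_table n ne)) [0..<Suc (length cs)] = cs @ [0]"

lemma indep_poly_compl_graph:
  assumes "valid_nonedges n ne" "has_indep_counts n cs ne"
  shows "indep_poly (compl_graph n ne) = Poly (map int cs)"
proof (rule indep_poly_eq_Poly)
  have "indep_count (compl_graph n ne) = count_cliques (succ_table n ne)"
    using indep_count_compl_graph[OF assms(1)] by blast
  then show "map (indep_count (compl_graph n ne)) [0..<Suc (length cs)] = cs @ [0]"
    using assms(2) unfolding has_indep_counts_def by simp
qed simp

lemma connected_compl_graph:
  assumes "0 < n"
    and "\<forall>v\<in>set [0..<n]. v = 0 \<or> \<not> listed ne 0 v \<or>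
      (\<exists>w\<in>set [0..<n]. w \<noteq> 0 \<and> w \<noteq> v \<and> \<not> listed ne 0 w \<and> \<not> listed ne w v)"
  shows "connected_graph (compl_graph n ne)"
proof (rule connected_graphI)
  let ?A = "adj (compl_graph n ne)"
  show "0 \<in> verts (compl_graph n ne)"
    using assms(1) by simp
  fix v assume "v \<in> verts (compl_graph n ne)"
  then have "v < n"
    by simp
  then have "v = 0 \<or> ?A 0 v \<or> (\<exists>w. ?A 0 w \<and> ?A w v)"
    using assms unfolding adj_compl_graph by fastforce
  then show "?A\<^sup>*\<^sup>* 0 v"
    by (auto intro: converse_rtranclp_into_rtranclp)
qed

lemma graph_iso_compl_graph_relabel:
  assumes "distinct \<sigma>" "set \<sigma> = {..<n}"
    and "\<forall>u\<in>set [0..<n]. \<forall>w\<in>set [0..<n]. listed ne' (\<sigma> ! u) (\<sigma> ! w) \<longleftrightarrow> listed ne u w"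
  shows "graph_iso (compl_graph n ne) (compl_graph n ne')"
  unfolding graph_iso_def
proof (intro exI[of _ "(!) \<sigma>"] conjI ballI)
  have length: "length \<sigma> = n"
    using distinct_card[OF assms(1)] assms(2) by simp
  then show "bij_betw ((!) \<sigma>) (verts (compl_graph n ne)) (verts (compl_graph n ne'))"
    using assms(1,2) by (intro bij_betw_nth) simp_all
  fix u w assume "u \<in> verts (compl_graph n ne)" "w \<in> verts (compl_graph n ne)"
  then have "u < n" "w < n" "\<sigma> ! u < n" "\<sigma> ! w < n"
    using assms(2) length nth_mem by fastforce+
  moreover have "\<sigma> ! u = \<sigma> ! w \<longleftrightarrow> u = w"
    using assms(1) length \<open>u < n\<close> \<open>w < n\<close> by (simp add: nth_eq_iff_index_eq)
  ultimately show "adj (compl_graph n ne) u w \<longleftrightarrow> adj (compl_graph n ne') (\<sigma> ! u) (\<sigma> ! w)"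
    using assms(3) by (simp add: adj_compl_graph)
qed

definition less_pairs :: "nat \<Rightarrow> (nat \<times> nat) list" where
  "less_pairs n = [(u, w). w \<leftarrow> [0..<n], u \<leftarrow> [0..<w]]"

lemma set_less_pairs: "(u, w) \<in> set (less_pairs n) \<longleftrightarrow> u < w \<and> w < n"
  by (force simp: less_pairs_def)

lemma distinct_less_pairs: "distinct (less_pairs n)"
  by (induction n) (auto simp: less_pairs_def distinct_map inj_on_def)

lemma valid_nonedges_subseq:
  assumes "ne \<in> set (subseqs (less_pairs n))"
  shows "valid_nonedges n ne"
proof -
  have "set ne \<in> set ` set (subseqs (less_pairs n))"
    using assms by (rule imageI)
  then have "set ne \<subseteq> set (less_pairs n)"
    by (simp add: subseqs_powset)
  moreover have "distinct ne"
    using assms distinct_less_pairs by (rule subseqs_distinctD)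
  ultimately show ?thesis
    unfolding valid_nonedges_def by (auto simp: set_less_pairs)
qed

lemma filter_in_subseqs: "filter P xs \<in> set (subseqs xs)"
  by (induction xs) (auto simp: Let_def)

lemma graph_iso_compl_graph_nonedges:
  assumes "simple_graph H" "verts H = {..<n}"
  obtains ne where "ne \<in> set (subseqs (less_pairs n))" "graph_iso H (compl_graph n ne)"
proof
  let ?ne = "filter (\<lambda>(u, w). \<not> adj H u w) (less_pairs n)"
  show "?ne \<in> set (subseqs (less_pairs n))"
    by (rule filter_in_subseqs)
  show "graph_iso H (compl_graph n ?ne)"
    unfolding graph_iso_def
  proof (intro exI[of _ id] conjI ballI)
    show "bij_betw id (verts H) (verts (compl_graph n ?ne))"
      using assms(2) by simp
    fix u v assume "u \<in> verts H" "v \<in> verts H"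
    then show "adj H u v \<longleftrightarrow> adj (compl_graph n ?ne) (id u) (id v)"
      using assms adj_irrefl[OF assms(1)]
      by (auto simp: adj_compl_graph listed_def set_less_pairs adj_commute[of H u v] linorder_neq_iff)
  qed
qed

section \<open>Isomorphism invariants\<close>

definition compl_degree :: "graph \<Rightarrow> nat \<Rightarrow> nat" where
  "compl_degree G u = card {w \<in> verts G. w \<noteq> u \<and> \<not> adj G u w}"

definition compl_degrees :: "graph \<Rightarrow> nat multiset" where
  "compl_degrees G = image_mset (compl_degree G) (mset_set (verts G))"

definition nonadj_pairs :: "graph \<Rightarrow> (nat \<times> nat) set" where
  "nonadj_pairs G = {(u, w) \<in> verts G \<times> verts G. u \<noteq> w \<and> \<not> adj G u w}"

definition compl_degree_pairs :: "graph \<Rightarrow> (nat \<times> nat) multiset" where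
  "compl_degree_pairs G =
     image_mset (map_prod (compl_degree G) (compl_degree G)) (mset_set (nonadj_pairs G))"

lemma compl_degree_iso:
  assumes "bij_betw f (verts G) (verts H)"
    and "\<forall>u\<in>verts G. \<forall>v\<in>verts G. adj G u v \<longleftrightarrow> adj H (f u) (f v)"
    and "u \<in> verts G"
  shows "compl_degree H (f u) = compl_degree G u"
proof -
  have inj: "inj_on f (verts G)" and onto: "f ` verts G = verts H"
    using assms(1) by (auto simp: bij_betw_def)
  have "{w \<in> verts H. w \<noteq> f u \<and> \<not> adj H (f u) w} = f ` {w \<in> verts G. w \<noteq> u \<and> \<not> adj G u w}"
    unfolding onto[symmetric] using assms(2,3) inj by (auto simp: inj_on_eq_iff)
  then show ?thesis
    unfolding compl_degree_def using inj by (simp add: card_image inj_on_subset)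
qed

lemma mem_mset_set: "x \<in># mset_set A \<Longrightarrow> x \<in> A"
  by (metis elem_mset_set empty_iff mset_set.infinite set_mset_empty)

lemma graph_iso_compl_degrees:
  assumes "graph_iso G H"
  shows "compl_degrees G = compl_degrees H"
proof -
  obtain f where f: "bij_betw f (verts G) (verts H)"
    "\<forall>u\<in>verts G. \<forall>v\<in>verts G. adj G u v \<longleftrightarrow> adj H (f u) (f v)"
    using assms unfolding graph_iso_def by blast
  then have "compl_degrees H = image_mset (compl_degree H \<circ> f) (mset_set (verts G))"
    unfolding compl_degrees_def bij_betw_def
    by (metis image_mset_mset_set multiset.map_comp)
  also have "\<dots> = compl_degrees G"
    unfolding compl_degrees_def
    by (rule image_mset_cong) (simp add: compl_degree_iso[OF f] mem_mset_set)
  finally show ?thesis ..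
qed

lemma graph_iso_compl_degree_pairs:
  assumes "graph_iso G H"
  shows "compl_degree_pairs G = compl_degree_pairs H"
proof -
  obtain f where f: "bij_betw f (verts G) (verts H)"
    "\<forall>u\<in>verts G. \<forall>v\<in>verts G. adj G u v \<longleftrightarrow> adj H (f u) (f v)"
    using assms unfolding graph_iso_def by blast
  have inj: "inj_on f (verts G)" and onto: "f ` verts G = verts H"
    using f(1) by (auto simp: bij_betw_def)
  have inj2: "inj_on (map_prod f f) (nonadj_pairs G)"
    using inj unfolding nonadj_pairs_def inj_on_def by auto
  have pairs: "nonadj_pairs H = map_prod f f ` nonadj_pairs G"
    unfolding onto[symmetric] nonadj_pairs_def using f(2) inj by (auto simp: inj_on_eq_iff)
  have "compl_degree_pairs H =
      image_mset (map_prod (compl_degree H) (compl_degree H) \<circ> map_prod f f) (mset_set (nonadj_pairs G))"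
    unfolding compl_degree_pairs_def pairs image_mset_mset_set[OF inj2, symmetric]
    by (simp only: multiset.map_comp)
  also have "\<dots> = compl_degree_pairs G"
    unfolding compl_degree_pairs_def
    by (rule image_mset_cong) (auto simp: compl_degree_iso[OF f] nonadj_pairs_def dest!: mem_mset_set)
  finally show ?thesis ..
qed

definition non_nbrs :: "(nat \<times> nat) list \<Rightarrow> nat \<Rightarrow> nat list" where
  "non_nbrs ne v = succs ne v @ map fst (filter (\<lambda>p. snd p = v) ne)"

lemma compl_degree_compl_graph:
  assumes "valid_nonedges n ne" "u < n"
  shows "compl_degree (compl_graph n ne) u = length (non_nbrs ne u)"
proof -
  have "distinct ne"
    using assms(1) by (simp add: valid_nonedges_def)
  then have "distinct (non_nbrs ne u)"
    unfolding non_nbrs_def succs_def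
    by (auto simp: distinct_map inj_on_def dest: valid_nonedges_asym[OF assms(1)])
  moreover have "set (non_nbrs ne u) = {w \<in> verts (compl_graph n ne). w \<noteq> u \<and> \<not> adj (compl_graph n ne) u w}"
    using assms(2) valid_nonedgesD[OF assms(1)]
    by (force simp: non_nbrs_def succs_def adj_compl_graph listed_def)
  ultimately show ?thesis
    unfolding compl_degree_def by (metis distinct_card)
qed

definition degree_sequence :: "nat \<Rightarrow> (nat \<times> nat) list \<Rightarrow> nat list" where
  "degree_sequence n ne = sort (map (\<lambda>u. length (non_nbrs ne u)) [0..<n])"

lemma compl_degrees_compl_graph:
  assumes "valid_nonedges n ne"
  shows "sorted_list_of_multiset (compl_degrees (compl_graph n ne)) = degree_sequence n ne"
proof -
  have "compl_degrees (compl_graph n ne) = mset (map (compl_degree (compl_graph n ne)) [0..<n])"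
    unfolding compl_degrees_def by (simp add: atLeast0LessThan)
  also have "\<dots> = mset (map (\<lambda>u. length (non_nbrs ne u)) [0..<n])"
    using compl_degree_compl_graph[OF assms] by (intro arg_cong[where f = mset] map_cong) auto
  finally show ?thesis
    unfolding degree_sequence_def by (metis sorted_list_of_multiset_mset)
qed

text \<open>The table of degrees is computed once, which matters for evaluation speed.\<close>
definition degree_signature :: "nat \<Rightarrow> (nat \<times> nat) list \<Rightarrow> (nat \<times> nat) list" where
  "degree_signature n ne =
     (let d = map (\<lambda>u. length (non_nbrs ne u)) [0..<n]
      in sort (map (map_prod ((!) d) ((!) d)) (ne @ map prod.swap ne)))"
lemma compl_degree_pairs_compl_graph:
  assumes "valid_nonedges n ne"
  shows "sorted_list_of_multiset (compl_degree_pairs (compl_graph n ne)) = degree_signature n ne"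
proof -
  let ?G = "compl_graph n ne"
  let ?xs = "ne @ map prod.swap ne"
  define d where "d = map (\<lambda>u. length (non_nbrs ne u)) [0..<n]"
  have pairs: "nonadj_pairs ?G = set ?xs"
    using assms unfolding nonadj_pairs_def
    by (auto simp: adj_compl_graph listed_def dest: valid_nonedgesD)
  have "distinct ne"
    using assms by (simp add: valid_nonedges_def)
  then have "distinct ?xs"
    by (auto simp: distinct_map dest: valid_nonedges_asym[OF assms])
  then have "compl_degree_pairs ?G = mset (map (map_prod (compl_degree ?G) (compl_degree ?G)) ?xs)"
    unfolding compl_degree_pairs_def pairs mset_map by (simp only: mset_set_set)
  also have "\<dots> = mset (map (map_prod ((!) d) ((!) d)) ?xs)"
  proof (intro arg_cong[where f = mset] map_cong refl)
    fix p assume "p \<in> set ?xs"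
    then have "p \<in> set ne \<or> prod.swap p \<in> set ne"
      by auto
    then obtain a b where "(a, b) \<in> set ne" "p = (a, b) \<or> p = (b, a)"
      by (metis prod.exhaust swap_simp)
    moreover from this(1) have "a < n" "b < n"
      using valid_nonedgesD[OF assms] by fastforce+
    ultimately have "fst p < n" "snd p < n"
      by auto
    then show "map_prod (compl_degree ?G) (compl_degree ?G) p = map_prod ((!) d) ((!) d) p"
      using compl_degree_compl_graph[OF assms] unfolding d_def by (cases p) simp
  qed
  finally show ?thesis
    unfolding degree_signature_def d_def[symmetric] Let_def by (metis sorted_list_of_multiset_mset)
qed

lemma degree_sequence_eq_if_iso:
  assumes "valid_nonedges n ne" "valid_nonedges n ne'"
    and "graph_iso (compl_graph n ne) (compl_graph n ne')"
  shows "degree_sequence n ne = degree_sequence n ne'"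
  using graph_iso_compl_degrees[OF assms(3)] compl_degrees_compl_graph assms(1,2) by metis

lemma degree_signature_eq_if_iso:
  assumes "valid_nonedges n ne" "valid_nonedges n ne'"
    and "graph_iso (compl_graph n ne) (compl_graph n ne')"
  shows "degree_signature n ne = degree_signature n ne'"
  using graph_iso_compl_degree_pairs[OF assms(3)] compl_degree_pairs_compl_graph assms(1,2) by metis

definition witness :: "nat \<Rightarrow> nat list \<Rightarrow> (nat \<times> nat) list \<Rightarrow> bool" where
  "witness n cs ne \<longleftrightarrow> valid_nonedges n ne \<and> 0 < n \<and> has_indep_counts n cs ne \<and>
     (\<forall>v\<in>set [0..<n]. v = 0 \<or> \<not> listed ne 0 v \<or>
        (\<exists>w\<in>set [0..<n]. w \<noteq> 0 \<and> w \<noteq> v \<and> \<not> listed ne 0 w \<and> \<not> listed ne w v))"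

lemma witness_graph:
  assumes "witness n cs ne"
  shows "simple_graph (compl_graph n ne) \<and> connected_graph (compl_graph n ne) \<and>
    indep_poly (compl_graph n ne) = Poly (map int cs)"
  using assms simple_compl_graph connected_compl_graph indep_poly_compl_graph
  unfolding witness_def by blast

lemma length_le_num_graphs_with_poly:
  assumes "list_all (witness n cs) L" "distinct (map f L)"
    and invariant: "\<And>ne ne'. valid_nonedges n ne \<Longrightarrow> valid_nonedges n ne' \<Longrightarrow>
      graph_iso (compl_graph n ne) (compl_graph n ne') \<Longrightarrow> f ne = f ne'"
  shows "length L \<le> num_graphs_with_poly (Poly (map int cs))"
proof -
  have valid: "valid_nonedges n ne" if "ne \<in> set L" for ne
    using assms(1) that unfolding list_all_iff witness_def by blast
  have same: "ne = ne'" if "ne \<in> set L" "ne' \<in> set L" "graph_iso (compl_graph n ne) (compl_graph n ne')"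
    for ne ne'
    using invariant[OF valid[OF that(1)] valid[OF that(2)] that(3)] that(1,2) assms(2) by (auto simp: distinct_map dest: inj_onD)
  have "length (map (compl_graph n) L) \<le> num_graphs_with_poly (Poly (map int cs))"
  proof (rule num_graphs_with_poly_ge)
    show "\<forall>G\<in>set (map (compl_graph n) L). simple_graph G \<and> connected_graph G \<and>
        indep_poly G = Poly (map int cs)"
      using assms(1) witness_graph unfolding list_all_iff by auto
    show "distinct (map (compl_graph n) L)"
      using assms(2) same graph_iso_refl by (auto simp: distinct_map inj_on_def)
    show "\<forall>G\<in>set (map (compl_graph n) L). \<forall>H\<in>set (map (compl_graph n) L). graph_iso G H \<longrightarrow> G = H"
      using same by auto
  qed
  then show ?thesis
    by simp
qed

section \<open>Uniqueness of the path on four vertices\<close>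

text \<open>The non-edges of the path 1 - 0 - 2 - 3, labelled so that every vertex is within
  distance 2 of vertex 0.\<close>
definition path_4 :: "(nat \<times> nat) list" where
  "path_4 = [(0, 3), (1, 2), (1, 3)]"

text \<open>One relabelling for each of the twelve labelled paths on four vertices.\<close>
definition path_4_relabellings :: "nat list list" where
  "path_4_relabellings = [[0,1,2,3], [0,1,3,2], [0,2,1,3], [1,0,2,3], [1,0,3,2], [1,2,0,3],
     [2,0,1,3], [2,0,3,1], [2,1,0,3], [3,0,1,2], [3,0,2,1], [3,1,0,2]]"

lemma path_4_exhaustive:
  "\<forall>ne\<in>set (filter (has_indep_counts 4 [1, 4, 3]) (subseqs (less_pairs 4))).
     (\<forall>u\<in>set [0..<4]. \<exists>w\<in>set [0..<4]. u \<noteq> w \<and> \<not> listed ne u w) \<longrightarrow>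
     (\<exists>\<sigma>\<in>set path_4_relabellings. \<forall>u\<in>set [0..<4]. \<forall>w\<in>set [0..<4].
        listed ne (\<sigma> ! u) (\<sigma> ! w) \<longleftrightarrow> listed path_4 u w)"
  by (simp add: less_pairs_def has_indep_counts_def succ_table_def succs_def listed_def
      path_4_def path_4_relabellings_def upt_rec)

lemma graph_iso_path_4_compl_graph:
  assumes "ne \<in> set (subseqs (less_pairs 4))" "has_indep_counts 4 [1, 4, 3] ne"
    and "\<forall>u\<in>set [0..<4]. \<exists>w\<in>set [0..<4]. u \<noteq> w \<and> \<not> listed ne u w"
  shows "graph_iso (compl_graph 4 path_4) (compl_graph 4 ne)"
proof -
  have "ne \<in> set (filter (has_indep_counts 4 [1, 4, 3]) (subseqs (less_pairs 4)))"
    using assms(1,2) by simp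
  with path_4_exhaustive assms(3) obtain \<sigma> where "\<sigma> \<in> set path_4_relabellings"
    and "\<forall>u\<in>set [0..<4]. \<forall>w\<in>set [0..<4]. listed ne (\<sigma> ! u) (\<sigma> ! w) \<longleftrightarrow> listed path_4 u w"
    by blast
  moreover from this(1) have "distinct \<sigma>" "set \<sigma> = {..<4}"
    by (auto simp: path_4_relabellings_def lessThan_nat_numeral)
  ultimately show ?thesis
    by (intro graph_iso_compl_graph_relabel) simp_all
qed

lemma graph_iso_path_4:
  assumes "simple_graph G" "connected_graph G" "indep_poly G = [:1, 4, 3:]"
  shows "graph_iso (compl_graph 4 path_4) G"
proof -
  have "card (verts G) = 4"
    using card_verts_eq_coeff_indep_poly[OF assms(1)] assms(3) by simp
  then obtain H where H: "graph_iso G H" "simple_graph H" "verts H = {..<4}"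
    using graph_iso_relabel[OF assms(1)] by metis
  then obtain ne where ne: "ne \<in> set (subseqs (less_pairs 4))" "graph_iso H (compl_graph 4 ne)"
    using graph_iso_compl_graph_nonedges by metis
  have iso: "graph_iso G (compl_graph 4 ne)"
    using H(1) ne(2) by (rule graph_iso_trans)
  have "count_cliques (succ_table 4 ne) k = nat (coeff [:1, 4, 3:] k)" for k
    using coeff_indep_poly[of G k] assms(1,3) graph_iso_indep_count[OF iso]
      indep_count_compl_graph[OF valid_nonedges_subseq[OF ne(1)]]
    by (simp add: simple_graph_def)
  then have counts: "has_indep_counts 4 [1, 4, 3] ne"
    unfolding has_indep_counts_def by (simp add: upt_rec numeral_eq_Suc)
  have connected: "connected_graph (compl_graph 4 ne)"
    using graph_iso_connected_graph[OF iso assms(1,2)] .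
  have "\<exists>w\<in>set [0..<4]. u \<noteq> w \<and> \<not> listed ne u w" if u: "u \<in> set [0..<4]" for u
  proof -
    obtain w where "adj (compl_graph 4 ne) u w"
      by (rule connected_graph_ex_adj[OF connected, of u "if u = 0 then 1 else 0"])
        (use u in auto)
    then show ?thesis
      by (auto simp: adj_compl_graph)
  qed
  then have "graph_iso (compl_graph 4 path_4) (compl_graph 4 ne)"
    using ne(1) counts by (intro graph_iso_path_4_compl_graph) auto
  then show ?thesis
    using iso graph_iso_sym graph_iso_trans by blast
qed

definition P1_witnesses :: "(nat \<times> nat) list list" where
  "P1_witnesses = [
    [(0,8), (0,9), (1,8), (2,10), (3,4), (3,5), (3,6), (4,8), (5,9)],
    [(0,1), (0,7), (1,5), (3,8), (3,11), (5,7), (6,7), (7,9), (9,11)],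
    [(0,8), (1,3), (1,9), (2,5), (4,7), (5,7), (5,8), (6,9), (6,11)],
    [(1,3), (1,10), (3,6), (4,9), (6,9), (6,10), (7,10), (9,11), (10,11)],
    [(0,3), (1,6), (3,4), (3,10), (3,11), (5,8), (5,11), (6,10), (9,10)],
    [(2,4), (2,5), (3,9), (4,10), (4,11), (5,10), (6,7), (6,9), (7,8)],
    [(0,7), (0,11), (1,2), (3,6), (3,7), (4,9), (5,8), (5,10), (7,8)],
    [(0,1), (1,3), (1,5), (2,3), (3,6), (3,8), (5,10), (5,11), (9,11)],
    [(2,4), (2,7), (2,8), (3,5), (3,6), (5,7), (6,8), (8,9), (8,10)],
    [(0,5), (0,6), (1,2), (3,6), (4,10), (6,9), (6,11), (8,9), (9,10)]]"

definition P3_witnesses :: "(nat \<times> nat) list list" where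
  "P3_witnesses = [
    [(0,5), (1,2), (1,6), (2,5), (2,7), (3,4), (3,5), (3,6)],
    [(0,7), (1,7), (2,5), (2,7), (3,6), (4,5), (4,7), (5,6)],
    [(0,1), (0,5), (1,2), (1,7), (2,6), (3,6), (5,7), (6,7)],
    [(0,5), (0,7), (1,3), (1,4), (2,3), (2,5), (3,6), (3,7)],
    [(0,3), (0,5), (1,6), (2,3), (2,5), (3,6), (4,7), (6,7)],
    [(0,2), (0,5), (1,5), (1,6), (2,4), (3,6), (4,7), (6,7)],
    [(0,5), (1,2), (1,3), (1,4), (2,6), (3,6), (3,7), (4,6)],
    [(0,4), (0,6), (1,2), (1,5), (2,3), (3,6), (3,7), (4,7)],
    [(0,2), (0,5), (1,4), (2,3), (3,4), (4,6), (5,6), (6,7)],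
    [(0,2), (0,7), (2,3), (2,6), (3,4), (4,5), (5,6), (6,7)],
    [(0,1), (0,3), (0,5), (1,7), (2,7), (3,4), (4,5), (4,6)],
    [(0,4), (1,5), (1,7), (2,7), (3,4), (3,7), (4,6), (5,6)],
    [(0,6), (1,2), (2,3), (3,4), (3,7), (4,5), (4,6), (5,7)],
    [(0,6), (0,7), (1,2), (1,6), (1,7), (2,5), (3,4), (5,6)],
    [(0,1), (0,3), (0,7), (2,4), (2,5), (2,7), (3,4), (3,6)],
    [(0,2), (0,5), (0,6), (0,7), (1,3), (3,5), (3,7), (4,7)],
    [(0,3), (0,7), (1,7), (2,5), (3,4), (3,6), (5,7), (6,7)],
    [(0,3), (0,5), (1,5), (1,6), (4,5), (4,6), (5,7), (6,7)],
    [(0,3), (0,7), (1,2), (2,3), (2,5), (4,5), (5,6), (5,7)],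
    [(0,1), (0,6), (1,7), (2,6), (3,4), (3,6), (5,7), (6,7)],
    [(0,6), (1,6), (1,7), (2,7), (3,7), (4,6), (4,7), (5,6)],
    [(0,6), (1,2), (1,6), (2,3), (2,4), (2,5), (4,6), (5,6)],
    [(0,1), (0,3), (0,7), (1,5), (1,6), (2,4), (3,6), (4,6)],
    [(1,2), (1,5), (2,3), (2,6), (2,7), (3,5), (5,6), (5,7)],
    [(0,4), (1,2), (1,6), (1,7), (2,5), (3,5), (3,6), (3,7)]]"

definition P4_witnesses :: "(nat \<times> nat) list list" where
  "P4_witnesses = [
    [(0,1), (0,2), (0,3), (0,5), (0,12), (0,14), (1,2), (1,3), (1,4), (1,7), (1,11), (1,12), (2,4), (2,5), (2,8), (2,10), (2,13), (3,8), (3,9), (3,10), (3,11), (3,13), (3,14), (4,5), (4,9), (4,12), (5,11), (5,12), (6,10), (6,11), (6,13), (6,14), (7,9), (7,12), (7,13), (7,14), (8,9), (8,14), (9,11), (9,12), (9,13), (10,11), (10,12), (11,12), (11,14)],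
    [(0,2), (0,3), (0,5), (0,8), (0,9), (0,11), (0,14), (1,3), (1,4), (1,8), (1,9), (1,10), (1,13), (1,14), (2,3), (2,5), (2,8), (2,10), (2,12), (2,13), (3,4), (3,6), (3,7), (3,9), (3,11), (4,7), (4,8), (4,10), (4,13), (5,9), (5,13), (6,8), (6,12), (6,13), (7,8), (7,12), (8,12), (8,14), (9,14), (10,11), (10,12), (11,12), (11,14), (12,13), (13,14)],
    [(0,3), (0,5), (0,6), (0,8), (0,10), (0,11), (0,13), (1,9), (1,10), (1,11), (1,13), (1,14), (2,4), (2,5), (2,7), (2,10), (2,11), (2,12), (2,14), (3,4), (3,8), (3,10), (3,11), (3,14), (4,6), (4,10), (4,12), (4,13), (5,9), (5,10), (5,14), (6,9), (6,11), (6,12), (6,14), (7,11), (7,14), (8,9), (8,12), (8,14), (9,10), (9,14), (10,13), (12,14), (13,14)],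
    [(0,6), (0,7), (0,11), (0,13), (1,5), (1,7), (1,8), (1,9), (1,10), (1,13), (2,3), (2,6), (2,8), (2,10), (3,7), (3,9), (3,12), (3,13), (3,14), (4,5), (4,9), (4,10), (4,11), (4,13), (4,14), (5,6), (5,11), (5,12), (5,13), (6,7), (6,8), (6,10), (6,11), (6,12), (6,14), (7,8), (7,12), (8,13), (8,14), (9,11), (9,13), (9,14), (10,12), (10,13), (12,13)]]"

definition P5_witnesses :: "(nat \<times> nat) list list" where
  "P5_witnesses = [
    [(1,7), (1,8), (2,5), (2,12), (3,5), (3,7), (3,9), (4,6), (4,7), (4,8), (4,11), (4,12), (5,8), (5,12), (7,8), (7,9), (7,10), (7,11), (8,10), (8,12), (10,11)],
    [(0,1), (0,4), (0,6), (0,12), (1,12), (2,5), (2,9), (3,6), (3,8), (4,5), (4,7), (4,8), (5,7), (5,8), (5,9), (5,11), (6,8), (6,12), (7,9), (8,9), (8,11)],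
    [(0,5), (0,10), (0,12), (1,6), (1,12), (3,4), (3,5), (3,8), (4,6), (4,7), (4,8), (4,11), (5,6), (5,12), (6,7), (6,8), (6,10), (6,11), (6,12), (10,11), (11,12)],
    [(0,1), (0,2), (0,4), (0,5), (1,3), (1,4), (1,5), (1,9), (2,4), (2,5), (2,10), (2,12), (3,5), (3,9), (3,11), (5,11), (6,9), (8,9), (8,12), (9,11), (10,12)],
    [(0,2), (0,3), (0,11), (1,4), (1,5), (1,9), (2,3), (2,6), (3,6), (3,7), (3,9), (3,12), (4,9), (5,8), (5,9), (6,7), (6,10), (6,12), (7,9), (7,10), (9,12)]]"

lemma witness_path_4: "witness 4 [1, 4, 3] path_4"
  by (simp add: path_4_def witness_def valid_nonedges_def has_indep_counts_def
      succ_table_def succs_def listed_def upt_rec)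

lemma P1_witnesses_witness: "list_all (witness 12 [1, 12, 9]) P1_witnesses"
  by (simp add: P1_witnesses_def witness_def valid_nonedges_def has_indep_counts_def
      succ_table_def succs_def listed_def upt_rec)

lemma P1_witnesses_distinct: "distinct (map (degree_sequence 12) P1_witnesses)"
  by (simp add: P1_witnesses_def degree_sequence_def non_nbrs_def succs_def upt_rec)

lemma P3_witnesses_witness: "list_all (witness 8 [1, 8, 8]) P3_witnesses"
  by (simp add: P3_witnesses_def witness_def valid_nonedges_def has_indep_counts_def
      succ_table_def succs_def listed_def upt_rec)

lemma P3_witnesses_distinct: "distinct (map (degree_signature 8) P3_witnesses)"
  by (simp add: P3_witnesses_def degree_signature_def non_nbrs_def succs_def upt_rec)

lemma P4_witnesses_witness: "list_all (witness 15 [1, 15, 45, 27]) P4_witnesses"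
  by (simp add: P4_witnesses_def witness_def valid_nonedges_def has_indep_counts_def
      succ_table_def succs_def listed_def upt_rec)

lemma P4_witnesses_distinct: "distinct (map (degree_sequence 15) P4_witnesses)"
  by (simp add: P4_witnesses_def degree_sequence_def non_nbrs_def succs_def upt_rec)

lemma P5_witnesses_witness: "list_all (witness 13 [1, 13, 21, 9]) P5_witnesses"
  by (simp add: P5_witnesses_def witness_def valid_nonedges_def has_indep_counts_def
      succ_table_def succs_def listed_def upt_rec)

lemma P5_witnesses_distinct: "distinct (map (degree_sequence 13) P5_witnesses)"
  by (simp add: P5_witnesses_def degree_sequence_def non_nbrs_def succs_def upt_rec)

lemma num_graphs_with_poly_P1: "10 \<le> num_graphs_with_poly [:1, 12, 9:]"
  using length_le_num_graphs_with_poly[OF P1_witnesses_witness P1_witnesses_distinct degree_sequence_eq_if_iso]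
  by (simp add: P1_witnesses_def)

lemma num_graphs_with_poly_P2: "num_graphs_with_poly [:1, 4, 3:] = 1"
proof -
  from witness_graph[OF witness_path_4] have "simple_graph (compl_graph 4 path_4) \<and>
      connected_graph (compl_graph 4 path_4) \<and> indep_poly (compl_graph 4 path_4) = [:1, 4, 3:]"
    by simp
  then show ?thesis
    using graph_iso_path_4 by (intro num_graphs_with_poly_eq_1) auto
qed

lemma num_graphs_with_poly_P3: "25 \<le> num_graphs_with_poly [:1, 8, 8:]"
  using length_le_num_graphs_with_poly[OF P3_witnesses_witness P3_witnesses_distinct degree_signature_eq_if_iso]
  by (simp add: P3_witnesses_def)

lemma num_graphs_with_poly_P4: "4 \<le> num_graphs_with_poly [:1, 15, 45, 27:]"
  using length_le_num_graphs_with_poly[OF P4_witnesses_witness P4_witnesses_distinct degree_sequence_eq_if_iso]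
  by (simp add: P4_witnesses_def)

lemma num_graphs_with_poly_P5: "5 \<le> num_graphs_with_poly [:1, 13, 21, 9:]"
  using length_le_num_graphs_with_poly[OF P5_witnesses_witness P5_witnesses_distinct degree_sequence_eq_if_iso]
  by (simp add: P5_witnesses_def)

theorem lemma4p2:
  shows "num_graphs_with_poly [:1, 12, 9:] > 0 \<and> num_graphs_with_poly [:1, 4, 3:] > 0 \<and>
         num_graphs_with_poly [:1, 8, 8:] > 0 \<and> num_graphs_with_poly [:1, 15, 45, 27:] > 0 \<and>
         num_graphs_with_poly [:1, 13, 21, 9:] > 0 \<and>
         num_graphs_with_poly [:1, 12, 9:] \<ge> 10 \<and> num_graphs_with_poly [:1, 4, 3:] = 1 \<and>
         num_graphs_with_poly [:1, 8, 8:] \<ge> 25 \<and> num_graphs_with_poly [:1, 15, 45, 27:] \<ge> 4 \<and>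
         num_graphs_with_poly [:1, 13, 21, 9:] \<ge> 5"
  using num_graphs_with_poly_P1 num_graphs_with_poly_P2 num_graphs_with_poly_P3
    num_graphs_with_poly_P4 num_graphs_with_poly_P5
  by simp

end
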